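(* Let $G$ be a DAG with $n$ nodes and $k,r,g,L$ positive integers. Suppose that every SPP pebbling strategy of $G$ with fast memory of size $k\cdot r$ uses at least $L$ I/O operations. Then every MPP pebbling strategy of $G$ with $k$ processors, fast memory size $r$ each, and I/O cost $g$ has cost at least $g\cdot L/k+n/k$.
   Context: Single-processor red-blue pebbling (SPP) with fast memory size $r$ on a DAG $G=(V,E)$: a state is a pair $(R,B)$ of subsets of $V$ (red and blue pebbles), starting with both empty. Rules: (R1-S) place a red pebble on a node carrying a blue pebble; (R2-S) place a blue pebble on a node carrying a red pebble; (R3-S) place a red pebble on a node all of whose in-neighbors carry red pebbles (in particular on any source); (R4-S) remove any pebble. At all times $|R|\le r$; a strategy must end in a state where every sink carries a pebble. Its I/O cost is the number of applications of (R1-S) and (R2-S). Multiprocessor red-blue pebbling (MPP). Input: a DAG $G=(V,E)$ with $n=|V|$ and positive integers $k$ (number of processors), $r$ (fast-memory size per processor), $g$ (cost of an I/O step). $\Delta_{in}$ denotes the maximum in-degree of $G$; sources/sinks are nodes of in-degree/out-degree $0$. A configuration is a tuple $(R^1,\dots,R^k,B)$ of subsets of $V$ ($R^j$ = nodes carrying a red pebble of processor $j$, $B$ = nodes carrying a blue pebble); it is valid if $|R^j|\le r$ for all $j$. The initial configuration has all sets empty; a configuration is terminal if every sink lies in $B\cup\bigcup_j R^j$. The transition rules are: (R1) for some $m\le k$, pairwise distinct processors $j_1,\dots,j_m$ and nodes $v_1,\dots,v_m$ with $v_i\in R^{j_i}$, add each $v_i$ to $B$ (cost $g$); (R2) for some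 $m\le k$, pairwise distinct processors $j_1,\dots,j_m$ and nodes $v_1,\dots,v_m\in B$, add each $v_i$ to $R^{j_i}$ (cost $g$); (R3) for some $m\le k$, pairwise distinct processors $j_1,\dots,j_m$ and nodes $v_1,\dots,v_m$ such that every in-neighbor of $v_i$ lies in $R^{j_i}$, add each $v_i$ to $R^{j_i}$ (cost $1$); (R4) remove a single red or blue pebble (cost $0$). A pebbling strategy is a sequence of valid configurations starting at the initial configuration and ending at a terminal one, each obtained from its predecessor by one rule; its cost is the sum of the costs of the rules applied. $\mathrm{OPT}$ denotes the minimum cost of a pebbling strategy. Applications of (R1),(R2) are called I/O steps and applications of (R3) compute steps. *)

theory Defs
  imports Complex_Main
begin

text \<open>A DAG is given by a finite node set V and an edge relation E \<subseteq> V \<times> V that is acyclic.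
  (u,v) \<in> E means u is an in-neighbor of v.\<close>

definition is_dag :: "'v set \<Rightarrow> ('v \<times> 'v) set \<Rightarrow> bool" where
  "is_dag V E \<longleftrightarrow> finite V \<and> E \<subseteq> V \<times> V \<and> acyclic E"

definition sinks :: "'v set \<Rightarrow> ('v \<times> 'v) set \<Rightarrow> 'v set" where
  "sinks V E = {v \<in> V. \<forall>w. (v, w) \<notin> E}"

datatype rule = Rule1 | Rule2 | Rule3 | Rule4

type_synonym 'v spp_conf = "'v set \<times> 'v set"  (* (R, B) *)

inductive spp_step :: "'v set \<Rightarrow> ('v \<times> 'v) set \<Rightarrow> 'v spp_conf \<Rightarrow> rule \<Rightarrow> 'v spp_conf \<Rightarrow> bool"
  for V E where
  R1S: "v \<in> B \<Longrightarrow> spp_step V E (R, B) Rule1 (insert v R, B)"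
| R2S: "v \<in> R \<Longrightarrow> spp_step V E (R, B) Rule2 (R, insert v B)"
| R3S: "v \<in> V \<Longrightarrow> (\<forall>u. (u, v) \<in> E \<longrightarrow> u \<in> R) \<Longrightarrow> spp_step V E (R, B) Rule3 (insert v R, B)"
| R4S_red: "v \<in> R \<Longrightarrow> spp_step V E (R, B) Rule4 (R - {v}, B)"
| R4S_blue: "v \<in> B \<Longrightarrow> spp_step V E (R, B) Rule4 (R, B - {v})"

definition spp_strategy :: "'v set \<Rightarrow> ('v \<times> 'v) set \<Rightarrow> nat \<Rightarrow> (rule \<times> 'v spp_conf) list \<Rightarrow> bool" where
  "spp_strategy V E r steps \<longleftrightarrow>
     (let cs = ({}, {}) # map snd steps in
       (\<forall>i < length steps. spp_step V E (cs ! i) (fst (steps ! i)) (cs ! Suc i)) \<and>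
       (\<forall>c \<in> set cs. card (fst c) \<le> r) \<and>
       (\<forall>v \<in> sinks V E. v \<in> fst (last cs) \<or> v \<in> snd (last cs)))"

definition spp_io_cost :: "(rule \<times> 'v spp_conf) list \<Rightarrow> nat" where
  "spp_io_cost steps = length (filter (\<lambda>s. fst s = Rule1 \<or> fst s = Rule2) steps)"

text \<open>Processors are 0,...,k-1; a configuration is (R, B) with R j the red pebbles of processor j.
  A simultaneous step acts on a nonempty set P of pairwise distinct processors (so m = card P \<le> k),
  processor j \<in> P acting on node vs j.\<close>

type_synonym 'v mpp_conf = "(nat \<Rightarrow> 'v set) \<times> 'v set"

definition add_reds :: "nat set \<Rightarrow> (nat \<Rightarrow> 'v) \<Rightarrow> (nat \<Rightarrow> 'v set) \<Rightarrow> (nat \<Rightarrow> 'v set)" where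
  "add_reds P vs R = (\<lambda>j. if j \<in> P then insert (vs j) (R j) else R j)"

inductive mpp_step :: "'v set \<Rightarrow> ('v \<times> 'v) set \<Rightarrow> nat \<Rightarrow> 'v mpp_conf \<Rightarrow> rule \<Rightarrow> 'v mpp_conf \<Rightarrow> bool"
  for V E k where
  R1: "P \<subseteq> {..<k} \<Longrightarrow> P \<noteq> {} \<Longrightarrow> (\<forall>j \<in> P. vs j \<in> R j) \<Longrightarrow>
       mpp_step V E k (R, B) Rule1 (R, B \<union> vs ` P)"
| R2: "P \<subseteq> {..<k} \<Longrightarrow> P \<noteq> {} \<Longrightarrow> (\<forall>j \<in> P. vs j \<in> B) \<Longrightarrow>
       mpp_step V E k (R, B) Rule2 (add_reds P vs R, B)"
| R3: "P \<subseteq> {..<k} \<Longrightarrow> P \<noteq> {} \<Longrightarrow>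
       (\<forall>j \<in> P. vs j \<in> V \<and> (\<forall>u. (u, vs j) \<in> E \<longrightarrow> u \<in> R j)) \<Longrightarrow>
       mpp_step V E k (R, B) Rule3 (add_reds P vs R, B)"
| R4_red: "j < k \<Longrightarrow> v \<in> R j \<Longrightarrow> mpp_step V E k (R, B) Rule4 (R(j := R j - {v}), B)"
| R4_blue: "v \<in> B \<Longrightarrow> mpp_step V E k (R, B) Rule4 (R, B - {v})"

definition mpp_strategy :: "'v set \<Rightarrow> ('v \<times> 'v) set \<Rightarrow> nat \<Rightarrow> nat \<Rightarrow> (rule \<times> 'v mpp_conf) list \<Rightarrow> bool" where
  "mpp_strategy V E k r steps \<longleftrightarrow>
     (let cs = ((\<lambda>_. {}), {}) # map snd steps in
       (\<forall>i < length steps. mpp_step V E k (cs ! i) (fst (steps ! i)) (cs ! Suc i)) \<and>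
       (\<forall>c \<in> set cs. \<forall>j < k. card (fst c j) \<le> r) \<and>
       (\<forall>v \<in> sinks V E. v \<in> snd (last cs) \<or> (\<exists>j < k. v \<in> fst (last cs) j)))"

fun rule_cost :: "nat \<Rightarrow> rule \<Rightarrow> nat" where
  "rule_cost g Rule1 = g"
| "rule_cost g Rule2 = g"
| "rule_cost g Rule3 = 1"
| "rule_cost g Rule4 = 0"

definition mpp_cost :: "nat \<Rightarrow> (rule \<times> 'v mpp_conf) list \<Rightarrow> nat" where
  "mpp_cost g steps = sum_list (map (\<lambda>s. rule_cost g (fst s)) steps)"

end

theory Submission
  imports Defs
begin

(* Pooling the red sets of the k processors turns an MPP strategy into an SPP strategy with fast
   memory k * r in which every parallel I/O step becomes at most k sequential ones, so
   L \<le> k * #I/O steps.  Independently, every pebble originates from a compute step; the computed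
   nodes contain all sinks and are closed under in-neighbours, hence in a DAG they are all of V,
   and a parallel compute step computes at most k nodes, so n \<le> k * #compute steps.
   Finally k * cost = g * k * #I/O steps + k * #compute steps \<ge> g * L + n. *)

fun run :: "('c \<Rightarrow> 'a \<Rightarrow> 'c \<Rightarrow> bool) \<Rightarrow> ('c \<Rightarrow> bool) \<Rightarrow> 'c \<Rightarrow> ('a \<times> 'c) list \<Rightarrow> bool" where
  "run step ok c [] = True"
| "run step ok c (p # t) = (step c (fst p) (snd p) \<and> ok (snd p) \<and> run step ok (snd p) t)"

definition run_end :: "'c \<Rightarrow> ('a \<times> 'c) list \<Rightarrow> 'c" where
  "run_end c t = last (c # map snd t)"

lemma run_end_Nil [simp]: "run_end c [] = c"
  by (simp add: run_end_def)

lemma run_end_Cons [simp]: "run_end c (p # t) = run_end (snd p) t"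
  by (cases t) (simp_all add: run_end_def)

lemma run_end_append: "run_end c (t @ u) = run_end (run_end c t) u"
  by (induction t arbitrary: c) auto

lemma run_append: "run step ok c (t @ u) \<longleftrightarrow> run step ok c t \<and> run step ok (run_end c t) u"
  by (induction t arbitrary: c) auto

lemma run_iff_nth:
  "run step ok c t \<longleftrightarrow>
     (\<forall>i < length t. step ((c # map snd t) ! i) (fst (t ! i)) ((c # map snd t) ! Suc i)) \<and>
     (\<forall>c' \<in> set (map snd t). ok c')"
  by (induction t arbitrary: c) (auto simp: All_less_Suc2)

abbreviation spp_run ::
    "'v set \<Rightarrow> ('v \<times> 'v) set \<Rightarrow> nat \<Rightarrow> 'v spp_conf \<Rightarrow> (rule \<times> 'v spp_conf) list \<Rightarrow> bool" where
  "spp_run V E b \<equiv> run (spp_step V E) (\<lambda>c. card (fst c) \<le> b)"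

abbreviation mpp_run :: "'v set \<Rightarrow> ('v \<times> 'v) set \<Rightarrow> nat \<Rightarrow> nat \<Rightarrow>
    'v mpp_conf \<Rightarrow> (rule \<times> 'v mpp_conf) list \<Rightarrow> bool" where
  "mpp_run V E k r \<equiv> run (mpp_step V E k) (\<lambda>c. \<forall>j < k. card (fst c j) \<le> r)"

lemma spp_strategy_iff_run:
  "spp_strategy V E b t \<longleftrightarrow>
     spp_run V E b ({}, {}) t \<and>
     (\<forall>v \<in> sinks V E. v \<in> fst (run_end ({}, {}) t) \<or> v \<in> snd (run_end ({}, {}) t))"
  by (simp add: spp_strategy_def run_iff_nth run_end_def Let_def)

lemma mpp_strategy_iff_run:
  "mpp_strategy V E k r s \<longleftrightarrow>
     mpp_run V E k r ((\<lambda>_. {}), {}) s \<and>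
     (\<forall>v \<in> sinks V E.
        v \<in> snd (run_end ((\<lambda>_. {}), {}) s) \<or> (\<exists>j < k. v \<in> fst (run_end ((\<lambda>_. {}), {}) s) j))"
  by (simp add: mpp_strategy_def run_iff_nth run_end_def Let_def)

definition io_rule :: "rule \<Rightarrow> bool" where
  "io_rule a \<longleftrightarrow> a = Rule1 \<or> a = Rule2"

definition io_steps :: "(rule \<times> 'c) list \<Rightarrow> nat" where
  "io_steps t = length (filter (\<lambda>p. io_rule (fst p)) t)"

definition compute_steps :: "(rule \<times> 'c) list \<Rightarrow> nat" where
  "compute_steps t = length (filter (\<lambda>p. fst p = Rule3) t)"

lemma io_steps_Nil [simp]: "io_steps [] = 0"
  and io_steps_Cons [simp]:
    "io_steps (p # t) = (if io_rule (fst p) then Suc (io_steps t) else io_steps t)"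
  and io_steps_append [simp]: "io_steps (t @ u) = io_steps t + io_steps u"
  by (simp_all add: io_steps_def)

lemma compute_steps_Nil [simp]: "compute_steps [] = 0"
  and compute_steps_Cons [simp]:
    "compute_steps (p # t) = (if fst p = Rule3 then Suc (compute_steps t) else compute_steps t)"
  by (simp_all add: compute_steps_def)

lemma spp_io_cost_eq_io_steps: "spp_io_cost t = io_steps t"
  by (simp add: spp_io_cost_def io_steps_def io_rule_def)

lemma mpp_cost_eq: "mpp_cost g s = g * io_steps s + compute_steps s"
proof (induction s)
  case (Cons p s)
  then show ?case by (cases "fst p") (simp_all add: mpp_cost_def io_rule_def)
qed (simp add: mpp_cost_def)

lemma io_steps_single_rule:
  "fst ` set t \<subseteq> {a} \<Longrightarrow> io_steps t = (if io_rule a then length t else 0)"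
  by (induction t) auto

(* No finiteness of X is needed: if X is infinite, every red set along the run has card 0. *)
lemma spp_run_insert_reds:
  assumes "finite S"
    and "\<And>x Y. x \<in> S \<Longrightarrow> X \<subseteq> Y \<Longrightarrow> spp_step V E (Y, B) a (insert x Y, B)"
    and "card (X \<union> S) \<le> b"
  shows "\<exists>t. spp_run V E b (X, B) t \<and> run_end (X, B) t = (X \<union> S, B) \<and>
             fst ` set t \<subseteq> {a} \<and> length t \<le> card S"
  using assms
proof (induction S rule: finite_induct)
  case empty
  show ?case by (intro exI[of _ "[]"]) simp
next
  case (insert x S)
  have "card (X \<union> S) \<le> b"
    using card_insert_le[of "X \<union> S" x] insert.prems(2) by simp
  with insert obtain t where t: "spp_run V E b (X, B) t" "run_end (X, B) t = (X \<union> S, B)"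
      "fst ` set t \<subseteq> {a}" "length t \<le> card S"
    by auto
  have "spp_step V E (X \<union> S, B) a (insert x (X \<union> S), B)"
    using insert.prems(1) by blast
  with t insert show ?case
    by (intro exI[of _ "t @ [(a, insert x (X \<union> S), B)]"]) (auto simp: run_append run_end_append)
qed

lemma spp_run_insert_blues:
  assumes "finite S" and "S \<subseteq> X" and "card X \<le> b"
  shows "\<exists>t. spp_run V E b (X, B) t \<and> run_end (X, B) t = (X, B \<union> S) \<and>
             fst ` set t \<subseteq> {Rule2} \<and> length t \<le> card S"
  using assms
proof (induction S rule: finite_induct)
  case empty
  show ?case by (intro exI[of _ "[]"]) simp
next
  case (insert x S)
  then obtain t where t: "spp_run V E b (X, B) t" "run_end (X, B) t = (X, B \<union> S)"
      "fst ` set t \<subseteq> {Rule2}" "length t \<le> card S"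
    by auto
  have "spp_step V E (X, B \<union> S) Rule2 (X, insert x (B \<union> S))"
    using insert.prems by (auto intro: spp_step.R2S)
  with t insert show ?case
    by (intro exI[of _ "t @ [(Rule2, X, insert x (B \<union> S))]"]) (auto simp: run_append run_end_append)
qed

definition pooled :: "nat \<Rightarrow> 'v mpp_conf \<Rightarrow> 'v spp_conf" where
  "pooled k c = ((\<Union>j<k. fst c j), snd c)"

lemma card_image_processors: "P \<subseteq> {..<k} \<Longrightarrow> card (vs ` P) \<le> k"
  by (metis card_image_le card_lessThan card_mono finite_lessThan finite_subset le_trans)

lemma pooled_add_reds:
  "P \<subseteq> {..<k} \<Longrightarrow> fst (pooled k (add_reds P vs R, B)) = fst (pooled k (R, B)) \<union> vs ` P"
  by (auto simp: pooled_def add_reds_def split: if_splits)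

lemma card_pooled_le: "\<forall>j < k. card (fst c j) \<le> r \<Longrightarrow> card (fst (pooled k c)) \<le> k * r"
proof -
  assume bound: "\<forall>j < k. card (fst c j) \<le> r"
  have "card (fst (pooled k c)) \<le> (\<Sum>j<k. card (fst c j))"
    unfolding pooled_def by (simp add: card_UN_le)
  also have "\<dots> \<le> (\<Sum>j<k. r)"
    using bound by (intro sum_mono) simp
  finally show ?thesis by simp
qed

lemma mpp_step_simulation:
  assumes step: "mpp_step V E k c a c'" and bound: "card (fst (pooled k c')) \<le> b"
  shows "\<exists>t. spp_run V E b (pooled k c) t \<and> run_end (pooled k c) t = pooled k c' \<and>
             io_steps t \<le> (if io_rule a then k else 0)"
  using step
proof (cases rule: mpp_step.cases)
  case (R1 P vs R B)
  have "finite (vs ` P)" "vs ` P \<subseteq> fst (pooled k c)" "card (fst (pooled k c)) \<le> b"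
    using R1 bound by (auto simp: pooled_def intro: finite_subset)
  from spp_run_insert_blues[OF this, where V = V and E = E and B = B]
  obtain t where "spp_run V E b (pooled k c) t"
      "run_end (pooled k c) t = pooled k c'" "fst ` set t \<subseteq> {Rule2}" "length t \<le> card (vs ` P)"
    using R1 by (auto simp: pooled_def)
  with card_image_processors[of P k vs] R1 show ?thesis
    by (auto simp: io_steps_single_rule io_rule_def)
next
  case (R2 P vs B R)
  have "finite (vs ` P)" using R2 by (meson finite_imageI finite_lessThan finite_subset)
  moreover have "\<And>x Y. x \<in> vs ` P \<Longrightarrow> spp_step V E (Y, B) Rule1 (insert x Y, B)"
    using R2 by (auto intro: spp_step.R1S)
  moreover have c': "pooled k c' = (fst (pooled k c) \<union> vs ` P, B)"
    using R2 pooled_add_reds[of P k vs R B] by (simp add: pooled_def)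
  moreover have "card (fst (pooled k c) \<union> vs ` P) \<le> b"
    using bound c' by simp
  ultimately obtain t where "spp_run V E b (pooled k c) t"
      "run_end (pooled k c) t = pooled k c'" "fst ` set t \<subseteq> {Rule1}" "length t \<le> card (vs ` P)"
    using spp_run_insert_reds[of "vs ` P" "fst (pooled k c)" V E B Rule1 b] R2
    by (auto simp: pooled_def)
  with card_image_processors[of P k vs] R2 show ?thesis
    by (auto simp: io_steps_single_rule io_rule_def)
next
  case (R3 P vs R B)
  have "finite (vs ` P)" using R3 by (meson finite_imageI finite_lessThan finite_subset)
  moreover have "spp_step V E (Y, B) Rule3 (insert x Y, B)"
    if x: "x \<in> vs ` P" and Y: "fst (pooled k c) \<subseteq> Y" for x Y
  proof -
    obtain j where j: "j \<in> P" "x = vs j" using x by blast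
    then have "j < k" using R3 by blast
    then have "R j \<subseteq> Y" using R3 Y unfolding pooled_def by auto
    with j R3 show ?thesis by (intro spp_step.R3S) auto
  qed
  moreover have c': "pooled k c' = (fst (pooled k c) \<union> vs ` P, B)"
    using R3 pooled_add_reds[of P k vs R B] by (simp add: pooled_def)
  moreover have "card (fst (pooled k c) \<union> vs ` P) \<le> b"
    using bound c' by simp
  ultimately obtain t where "spp_run V E b (pooled k c) t"
      "run_end (pooled k c) t = pooled k c'" "fst ` set t \<subseteq> {Rule3}"
    using spp_run_insert_reds[of "vs ` P" "fst (pooled k c)" V E B Rule3 b] R3
    by (auto simp: pooled_def)
  then show ?thesis
    by (auto simp: io_steps_single_rule io_rule_def)
next
  case (R4_red j v R B)
  show ?thesis
  proof (cases "fst (pooled k c') = fst (pooled k c)")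
    case True
    with R4_red show ?thesis
      by (intro exI[of _ "[]"]) (simp add: pooled_def io_rule_def)
  next
    case False
    then have "fst (pooled k c') = fst (pooled k c) - {v}" "v \<in> fst (pooled k c)"
      using R4_red by (auto simp: pooled_def split: if_splits)
    with R4_red bound show ?thesis
      by (intro exI[of _ "[(Rule4, fst (pooled k c) - {v}, B)]"])
        (auto simp: pooled_def io_rule_def intro: spp_step.R4S_red)
  qed
next
  case (R4_blue v B R)
  with bound show ?thesis
    by (intro exI[of _ "[(Rule4, fst (pooled k c), B - {v})]"])
      (auto simp: pooled_def io_rule_def intro: spp_step.R4S_blue)
qed

lemma mpp_run_simulation:
  "mpp_run V E k r c s \<Longrightarrow>
     \<exists>t. spp_run V E (k * r) (pooled k c) t \<and> run_end (pooled k c) t = pooled k (run_end c s) \<and>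
         io_steps t \<le> k * io_steps s"
proof (induction s arbitrary: c)
  case Nil
  show ?case by (intro exI[of _ "[]"]) simp
next
  case (Cons p s)
  then have step: "mpp_step V E k c (fst p) (snd p)" and "card (fst (pooled k (snd p))) \<le> k * r"
    by (auto intro: card_pooled_le)
  from mpp_step_simulation[OF this] obtain t where t: "spp_run V E (k * r) (pooled k c) t"
      "run_end (pooled k c) t = pooled k (snd p)" "io_steps t \<le> (if io_rule (fst p) then k else 0)"
    by blast
  from Cons.IH[of "snd p"] Cons.prems
  obtain u where u: "spp_run V E (k * r) (pooled k (snd p)) u"
      "run_end (pooled k (snd p)) u = pooled k (run_end (snd p) s)" "io_steps u \<le> k * io_steps s"
    by auto
  from t u show ?case
    by (intro exI[of _ "t @ u"]) (auto simp: run_append run_end_append)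
qed

theorem spp_strategy_of_mpp_strategy:
  assumes "mpp_strategy V E k r s"
  shows "\<exists>t. spp_strategy V E (k * r) t \<and> io_steps t \<le> k * io_steps s"
proof -
  obtain t
    where "spp_run V E (k * r) ({}, {}) t"
      "run_end ({}, {}) t = pooled k (run_end ((\<lambda>_. {}), {}) s)" "io_steps t \<le> k * io_steps s"
  proof -
    from assms have "mpp_run V E k r ((\<lambda>_. {}), {}) s" by (simp add: mpp_strategy_iff_run)
    from mpp_run_simulation[OF this] that show ?thesis by (auto simp: pooled_def)
  qed
  with assms show ?thesis
    by (force simp: spp_strategy_iff_run mpp_strategy_iff_run pooled_def)
qed

lemma dag_reaches_sink:
  assumes "is_dag V E" and "v \<in> V"
  shows "\<exists>w \<in> sinks V E. (v, w) \<in> E\<^sup>*"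
proof -
  have "E \<subseteq> V \<times> V" "finite E" "acyclic E"
    using assms(1) unfolding is_dag_def by (simp_all add: finite_subset[of E "V \<times> V"])
  then have "wf (E\<inverse>)" by (simp add: finite_acyclic_wf_converse)
  then show ?thesis
    using assms(2)
  proof (induction v rule: wf_induct_rule)
    case (less v)
    show ?case
    proof (cases "v \<in> sinks V E")
      case False
      then obtain w where "(v, w) \<in> E" using less.prems by (auto simp: sinks_def)
      moreover have "w \<in> V" using \<open>(v, w) \<in> E\<close> \<open>E \<subseteq> V \<times> V\<close> by blast
      ultimately show ?thesis
        using less.IH[of w] by (meson converse_iff converse_rtrancl_into_rtrancl)
    qed auto
  qed
qed

lemma dag_subset_pred_closed:
  assumes "is_dag V E" and "sinks V E \<subseteq> C"
    and pred: "\<And>u v. (u, v) \<in> E \<Longrightarrow> v \<in> C \<Longrightarrow> u \<in> C"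
  shows "V \<subseteq> C"
proof
  fix v assume "v \<in> V"
  then obtain w where "w \<in> sinks V E" "(v, w) \<in> E\<^sup>*"
    using dag_reaches_sink[OF assms(1)] by blast
  from \<open>(v, w) \<in> E\<^sup>*\<close> show "v \<in> C"
  proof (induction rule: converse_rtrancl_induct)
    case base
    show ?case using \<open>w \<in> sinks V E\<close> assms(2) by blast
  next
    case (step u x)
    then show ?case using pred by blast
  qed
qed

definition pebbled :: "'v mpp_conf \<Rightarrow> 'v set" where
  "pebbled c = (\<Union>j. fst c j) \<union> snd c"

definition new_reds :: "'v mpp_conf \<Rightarrow> 'v mpp_conf \<Rightarrow> 'v set" where
  "new_reds c c' = (\<Union>j. fst c' j - fst c j)"

fun computed :: "'v mpp_conf \<Rightarrow> (rule \<times> 'v mpp_conf) list \<Rightarrow> 'v set" where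
  "computed c [] = {}"
| "computed c (p # t) = (if fst p = Rule3 then new_reds c (snd p) else {}) \<union> computed (snd p) t"

lemma pebbled_mpp_step:
  "mpp_step V E k c a c' \<Longrightarrow> pebbled c' \<subseteq> pebbled c \<union> (if a = Rule3 then new_reds c c' else {})"
  by (induction rule: mpp_step.induct)
    (auto simp: pebbled_def new_reds_def add_reds_def split: if_splits)

lemma compute_step_new_reds:
  assumes "mpp_step V E k c Rule3 c'"
  obtains P vs where "P \<subseteq> {..<k}" "new_reds c c' \<subseteq> vs ` P"
    "\<And>j u. j \<in> P \<Longrightarrow> (u, vs j) \<in> E \<Longrightarrow> u \<in> fst c j"
  using assms
proof (cases rule: mpp_step.cases)
  case (R3 P vs R B)
  then show ?thesis
    by (intro that[of P vs]) (auto simp: new_reds_def add_reds_def split: if_splits)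
qed

lemma finite_card_new_reds:
  assumes "mpp_step V E k c Rule3 c'"
  shows "finite (new_reds c c') \<and> card (new_reds c c') \<le> k"
proof -
  obtain P vs where P: "P \<subseteq> {..<k}" and sub: "new_reds c c' \<subseteq> vs ` P"
    using compute_step_new_reds[OF assms] by metis
  have fin: "finite (vs ` P)"
    using finite_subset[OF P] by simp
  show ?thesis
    using finite_subset[OF sub fin] card_mono[OF fin sub] card_image_processors[OF P, of vs]
    by linarith
qed

lemma pred_new_reds_pebbled:
  assumes "mpp_step V E k c Rule3 c'" and "v \<in> new_reds c c'" and "(u, v) \<in> E"
  shows "u \<in> pebbled c"
proof -
  obtain P vs where "P \<subseteq> {..<k}" "new_reds c c' \<subseteq> vs ` P"
    and pred: "\<And>j u. j \<in> P \<Longrightarrow> (u, vs j) \<in> E \<Longrightarrow> u \<in> fst c j"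
    using compute_step_new_reds[OF assms(1)] by metis
  with assms(2) obtain j where "j \<in> P" "v = vs j" by blast
  with pred assms(3) show ?thesis by (auto simp: pebbled_def)
qed

lemma pebbled_run_end:
  "run (mpp_step V E k) ok c s \<Longrightarrow> pebbled (run_end c s) \<subseteq> pebbled c \<union> computed c s"
proof (induction s arbitrary: c)
  case (Cons p s)
  then have "pebbled (run_end (snd p) s) \<subseteq> pebbled (snd p) \<union> computed (snd p) s"
    using Cons.IH[of "snd p"] by simp
  with Cons.prems pebbled_mpp_step[of V E k c "fst p" "snd p"] show ?case
    by auto
qed simp

lemma computed_pred_closed:
  "run (mpp_step V E k) ok c s \<Longrightarrow> v \<in> computed c s \<Longrightarrow> (u, v) \<in> E \<Longrightarrow>
     u \<in> pebbled c \<union> computed c s"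
proof (induction s arbitrary: c)
  case (Cons p s)
  then have step: "mpp_step V E k c (fst p) (snd p)" and run: "run (mpp_step V E k) ok (snd p) s"
    by auto
  show ?case
  proof (cases "v \<in> computed (snd p) s")
    case True
    with Cons.IH[OF run] Cons.prems(3) pebbled_mpp_step[OF step] show ?thesis
      by auto
  next
    case False
    with Cons.prems(2) have "fst p = Rule3" "v \<in> new_reds c (snd p)"
      by (auto split: if_splits)
    with step pred_new_reds_pebbled Cons.prems(3) show ?thesis
      by fastforce
  qed
qed simp

lemma finite_card_computed:
  "run (mpp_step V E k) ok c s \<Longrightarrow>
     finite (computed c s) \<and> card (computed c s) \<le> k * compute_steps s"
proof (induction s arbitrary: c)
  case (Cons p s)
  then have IH: "finite (computed (snd p) s) \<and> card (computed (snd p) s) \<le> k * compute_steps s"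
    and step: "mpp_step V E k c (fst p) (snd p)"
    using Cons.IH[of "snd p"] by auto
  with finite_card_new_reds[of V E k c "snd p"] show ?case
    using card_Un_le[of "new_reds c (snd p)" "computed (snd p) s"] by auto
qed simp

theorem card_le_compute_steps:
  fixes V :: "'v set"
  assumes "is_dag V E" and "mpp_strategy V E k r s"
  shows "card V \<le> k * compute_steps s"
proof -
  define c0 :: "'v mpp_conf" where "c0 = ((\<lambda>_. {}), {})"
  have run: "mpp_run V E k r c0 s" and terminal: "sinks V E \<subseteq> pebbled (run_end c0 s)"
    using assms(2) by (auto simp: mpp_strategy_iff_run pebbled_def c0_def)
  have empty: "pebbled c0 = {}" by (simp add: pebbled_def c0_def)
  have "V \<subseteq> computed c0 s"
  proof (rule dag_subset_pred_closed[OF assms(1)])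
    show "sinks V E \<subseteq> computed c0 s"
      using terminal pebbled_run_end[OF run] empty by auto
    show "u \<in> computed c0 s" if "(u, v) \<in> E" "v \<in> computed c0 s" for u v
      using computed_pred_closed[OF run that(2,1)] empty by auto
  qed
  with finite_card_computed[OF run] show ?thesis
    using card_mono[of "computed c0 s" V] by auto
qed

theorem corollary6:
  fixes V :: "'v set" and E :: "('v \<times> 'v) set" and k r g L :: nat
    and s :: "(rule \<times> 'v mpp_conf) list"
  assumes "is_dag V E"
    and "k > 0" and "r > 0" and "g > 0" and "L > 0"
    and "\<forall>t. spp_strategy V E (k * r) t \<longrightarrow> L \<le> spp_io_cost t"
    and "mpp_strategy V E k r s"
  shows "real g * real L / real k + real (card V) / real k \<le> real (mpp_cost g s)"
proof -
  obtain t where "spp_strategy V E (k * r) t" "io_steps t \<le> k * io_steps s"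
    using spp_strategy_of_mpp_strategy[OF assms(7)] by blast
  with assms(6) have io: "L \<le> k * io_steps s"
    by (auto simp: spp_io_cost_eq_io_steps)
  have compute: "card V \<le> k * compute_steps s"
    using card_le_compute_steps[OF assms(1,7)] .
  have "g * L \<le> g * (k * io_steps s)"
    using io by (rule mult_le_mono2)
  with compute have "g * L + card V \<le> g * (k * io_steps s) + k * compute_steps s"
    by linarith
  also have "\<dots> = k * mpp_cost g s"
    by (simp add: mpp_cost_eq algebra_simps)
  finally have "g * L + card V \<le> k * mpp_cost g s" .
  then have "real g * real L + real (card V) \<le> real k * real (mpp_cost g s)"
    by (metis of_nat_add of_nat_le_iff of_nat_mult)
  with assms(2) show ?thesis
    by (simp add: field_simps)
qed

end
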